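(* Let $k\ge1$ and let $A,B$ be FDSs. If $A^k=B^k$, then $[A]_0=[B]_0$.
   Context: A finite dynamical system (FDS) is a function $A:S_A\to S_A$ on a finite set, considered up to isomorphism of functional graphs. The product $AB$ acts on $S_A\times S_B$ by $(a,b)\mapsto(A(a),B(b))$ and $A^k$ is the $k$-fold product. A state $s$ is a cycle state if some $m$-fold iterate ($m>0$) of $A$ fixes $s$; $[A]_0$ is the restriction of $A$ to its cycle states (a permutation). *)

theory Defs
  imports "HOL-Library.FuncSet"
begin

definition is_fds :: "'a set \<Rightarrow> ('a \<Rightarrow> 'a) \<Rightarrow> bool" where
  "is_fds S f \<longleftrightarrow> finite S \<and> f ` S \<subseteq> S"

text \<open>Isomorphism of functional graphs (equality of FDSs up to isomorphism).\<close>
definition fds_iso :: "'a set \<Rightarrow> ('a \<Rightarrow> 'a) \<Rightarrow> 'b set \<Rightarrow> ('b \<Rightarrow> 'b) \<Rightarrow> bool" where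
  "fds_iso S f T g \<longleftrightarrow> (\<exists>h. bij_betw h S T \<and> (\<forall>x\<in>S. h (f x) = g (h x)))"

text \<open>k-fold product: states are k-tuples (functions on {..<k}), acting componentwise.\<close>
definition fds_pow_carrier :: "'a set \<Rightarrow> nat \<Rightarrow> (nat \<Rightarrow> 'a) set" where
  "fds_pow_carrier S k = PiE {..<k} (\<lambda>_. S)"

definition fds_pow :: "('a \<Rightarrow> 'a) \<Rightarrow> nat \<Rightarrow> (nat \<Rightarrow> 'a) \<Rightarrow> (nat \<Rightarrow> 'a)" where
  "fds_pow f k = (\<lambda>x. restrict (\<lambda>i. f (x i)) {..<k})"

definition cycle_states :: "'a set \<Rightarrow> ('a \<Rightarrow> 'a) \<Rightarrow> 'a set" where
  "cycle_states S f = {s \<in> S. \<exists>m>0. (f ^^ m) s = s}"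

end

theory Submission
  imports Defs
begin

text \<open>
  The product \<open>A\<^sup>k\<close> fixes exactly the \<open>k\<close>-tuples of states fixed by \<open>A\<close>, so the \<open>j\<close>-th iterate
  of \<open>A\<^sup>k\<close> has \<open>|Fix(A\<^sup>j)|\<^sup>k\<close> fixed points. An isomorphism \<open>A\<^sup>k \<cong> B\<^sup>k\<close> preserves these
  numbers, and since \<open>k\<close>-th roots are unique in \<open>\<nat>\<close>, the iterates \<open>A\<^sup>j\<close> and \<open>B\<^sup>j\<close> fix equally many
  states for every \<open>j > 0\<close>. Such states are cycle states, so \<open>[A]\<^sub>0\<close> and \<open>[B]\<^sub>0\<close> are permutations
  with the same fixed-point counts of all iterates, and such permutations are conjugate: the
  counts vanish below the length \<open>m\<close> of a shortest cycle on both sides, so both have a cycle of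
  length \<open>m\<close>; removing the two cycles lowers each count by \<open>m\<close> exactly at the multiples of \<open>m\<close>,
  and induction on the number of states finishes the proof.
\<close>

definition fixpoints :: "'a set \<Rightarrow> ('a \<Rightarrow> 'a) \<Rightarrow> 'a set" where
  "fixpoints S f = {x \<in> S. f x = x}"

definition forward_orbit :: "('a \<Rightarrow> 'a) \<Rightarrow> 'a \<Rightarrow> 'a set" where
  "forward_orbit f x = range (\<lambda>n. (f ^^ n) x)"

definition minimal_period :: "('a \<Rightarrow> 'a) \<Rightarrow> 'a \<Rightarrow> nat \<Rightarrow> bool" where
  "minimal_period f x m \<longleftrightarrow> 0 < m \<and> (f ^^ m) x = x \<and> (\<forall>d. 0 < d \<longrightarrow> d < m \<longrightarrow> (f ^^ d) x \<noteq> x)"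

lemma funpow_image_subset:
  assumes "f ` S \<subseteq> S" shows "(f ^^ n) ` S \<subseteq> S"
  using assms by (induction n) auto

lemma minimal_period_funpow_eq_iff:
  assumes "minimal_period f x m"
  shows "(f ^^ i) x = (f ^^ j) x \<longleftrightarrow> i mod m = j mod m"
proof
  show "i mod m = j mod m \<Longrightarrow> (f ^^ i) x = (f ^^ j) x"
    using assms funpow_mod_eq unfolding minimal_period_def by metis
next
  have le_eq: "a = b" if eq: "(f ^^ a) x = (f ^^ b) x" and "a \<le> b" "b < m" for a b
  proof (rule ccontr)
    assume "a \<noteq> b"
    have "(f ^^ (m - b + a)) x = (f ^^ (m - b)) ((f ^^ b) x)"
      using eq by (simp add: funpow_add)
    also have "\<dots> = (f ^^ (m - b + b)) x"
      by (simp add: funpow_add)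
    also have "\<dots> = x"
      using assms \<open>b < m\<close> by (simp add: minimal_period_def)
    finally show False
      using assms \<open>a \<le> b\<close> \<open>a \<noteq> b\<close> \<open>b < m\<close> unfolding minimal_period_def by auto
  qed
  assume "(f ^^ i) x = (f ^^ j) x"
  then have "(f ^^ (i mod m)) x = (f ^^ (j mod m)) x"
    using assms funpow_mod_eq unfolding minimal_period_def by metis
  moreover have "i mod m < m" "j mod m < m"
    using assms unfolding minimal_period_def by auto
  ultimately show "i mod m = j mod m"
    using le_eq[of "i mod m" "j mod m"] le_eq[of "j mod m" "i mod m"] by (metis nat_le_linear)
qed

lemma forward_orbit_eq_image:
  assumes "minimal_period f x m"
  shows "forward_orbit f x = (\<lambda>n. (f ^^ n) x) ` {..<m}"
proof -
  have "(f ^^ n) x = (f ^^ (n mod m)) x" "n mod m < m" for n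
    using assms funpow_mod_eq unfolding minimal_period_def by (metis, simp)
  then show ?thesis
    unfolding forward_orbit_def by (auto intro: image_eqI)
qed

lemma card_forward_orbit:
  assumes "minimal_period f x m"
  shows "card (forward_orbit f x) = m"
proof -
  have "inj_on (\<lambda>n. (f ^^ n) x) {..<m}"
    by (rule inj_onI) (simp add: minimal_period_funpow_eq_iff[OF assms])
  then show ?thesis
    by (simp add: forward_orbit_eq_image[OF assms] card_image)
qed

lemma forward_orbit_subset:
  assumes "f ` S \<subseteq> S" "x \<in> S"
  shows "forward_orbit f x \<subseteq> S"
  using funpow_image_subset[OF assms(1)] assms(2) unfolding forward_orbit_def by blast

lemma image_forward_orbit_subset: "f ` forward_orbit f x \<subseteq> forward_orbit f x"
proof -
  have "f ((f ^^ n) x) = (f ^^ Suc n) x" for n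
    by simp
  then show ?thesis
    unfolding forward_orbit_def by blast
qed

lemma funpow_fixes_forward_orbit_iff:
  assumes "minimal_period f x m" "z \<in> forward_orbit f x"
  shows "(f ^^ j) z = z \<longleftrightarrow> m dvd j"
proof -
  obtain i where z: "z = (f ^^ i) x"
    using assms(2) unfolding forward_orbit_def by blast
  have "(f ^^ j) z = z \<longleftrightarrow> (f ^^ (j + i)) x = (f ^^ i) x"
    by (simp add: z funpow_add)
  also have "\<dots> \<longleftrightarrow> (j + i) mod m = i mod m"
    by (rule minimal_period_funpow_eq_iff[OF assms(1)])
  also have "\<dots> \<longleftrightarrow> m dvd j"
    by (simp add: mod_eq_dvd_iff_nat)
  finally show ?thesis .
qed

lemma fds_iso_forward_orbits:
  assumes f: "minimal_period f x m" and g: "minimal_period g y m"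
  shows "fds_iso (forward_orbit f x) f (forward_orbit g y) g"
proof -
  define h where "h z = (g ^^ (LEAST n. (f ^^ n) x = z)) y" for z
  have h_funpow: "h ((f ^^ n) x) = (g ^^ n) y" for n
  proof -
    have "(f ^^ (LEAST l. (f ^^ l) x = (f ^^ n) x)) x = (f ^^ n) x"
      by (rule LeastI[of _ n]) (rule refl)
    then show ?thesis
      unfolding h_def by (simp add: minimal_period_funpow_eq_iff[OF f] minimal_period_funpow_eq_iff[OF g])
  qed
  have "inj_on h (forward_orbit f x)"
    unfolding inj_on_def forward_orbit_def
    by (auto simp: h_funpow minimal_period_funpow_eq_iff[OF f] minimal_period_funpow_eq_iff[OF g])
  moreover have "h ` forward_orbit f x = forward_orbit g y"
    unfolding forward_orbit_def image_image h_funpow ..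
  ultimately have "bij_betw h (forward_orbit f x) (forward_orbit g y)"
    unfolding bij_betw_def ..
  moreover have "h (f z) = g (h z)" if z: "z \<in> forward_orbit f x" for z
  proof -
    obtain n where "z = (f ^^ n) x"
      using z unfolding forward_orbit_def by blast
    then show ?thesis
      using h_funpow[of "Suc n"] by (simp add: h_funpow)
  qed
  ultimately show ?thesis
    unfolding fds_iso_def by blast
qed

lemma fds_iso_Un:
  assumes iso1: "fds_iso S1 f T1 g" and iso2: "fds_iso S2 f T2 g"
    and "S1 \<inter> S2 = {}" "T1 \<inter> T2 = {}" "f ` S1 \<subseteq> S1" "f ` S2 \<subseteq> S2"
  shows "fds_iso (S1 \<union> S2) f (T1 \<union> T2) g"
proof -
  obtain h1 h2 where h1: "bij_betw h1 S1 T1" "\<forall>x\<in>S1. h1 (f x) = g (h1 x)"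
    and h2: "bij_betw h2 S2 T2" "\<forall>x\<in>S2. h2 (f x) = g (h2 x)"
    using iso1 iso2 unfolding fds_iso_def by blast
  define h where "h z = (if z \<in> S1 then h1 z else h2 z)" for z
  have "bij_betw h S1 T1 \<longleftrightarrow> bij_betw h1 S1 T1" "bij_betw h S2 T2 \<longleftrightarrow> bij_betw h2 S2 T2"
    using \<open>S1 \<inter> S2 = {}\<close> by (auto intro!: bij_betw_cong simp: h_def)
  then have "bij_betw h S1 T1" "bij_betw h S2 T2"
    using h1(1) h2(1) by blast+
  then have "bij_betw h (S1 \<union> S2) (T1 \<union> T2)"
    using \<open>T1 \<inter> T2 = {}\<close> by (rule bij_betw_combine)
  moreover have "\<forall>x\<in>S1 \<union> S2. h (f x) = g (h x)"
    using h1(2) h2(2) assms(3,5,6) by (auto simp: h_def)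
  ultimately show ?thesis
    unfolding fds_iso_def by blast
qed

lemma fds_iso_funpow:
  assumes "fds_iso S f T g" "f ` S \<subseteq> S"
  shows "fds_iso S (f ^^ n) T (g ^^ n)"
proof -
  obtain h where h: "bij_betw h S T" "\<forall>x\<in>S. h (f x) = g (h x)"
    using assms(1) unfolding fds_iso_def by blast
  have "h ((f ^^ n) x) = (g ^^ n) (h x)" if "x \<in> S" for x
  proof (induction n)
    case (Suc n)
    have "(f ^^ n) x \<in> S"
      using funpow_image_subset[OF assms(2)] that by blast
    then show ?case
      using Suc h(2) by simp
  qed simp
  then show ?thesis
    using h(1) unfolding fds_iso_def by blast
qed

lemma fds_iso_card_fixpoints:
  assumes "fds_iso S f T g" "f ` S \<subseteq> S"
  shows "card (fixpoints S f) = card (fixpoints T g)"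
proof -
  obtain h where h: "bij_betw h S T" "\<forall>x\<in>S. h (f x) = g (h x)"
    using assms(1) unfolding fds_iso_def by blast
  have inj: "inj_on h S" and T: "T = h ` S"
    using h(1) by (auto simp: bij_betw_def)
  have fixed_iff: "g (h x) = h x \<longleftrightarrow> f x = x" if "x \<in> S" for x
  proof -
    have "g (h x) = h (f x)" "f x \<in> S"
      using h(2) assms(2) that by auto
    then show ?thesis
      using inj_on_eq_iff[OF inj] that by auto
  qed
  have "fixpoints T g = h ` fixpoints S f"
    unfolding fixpoints_def T using fixed_iff by auto
  moreover have "inj_on h (fixpoints S f)"
    using inj by (rule inj_on_subset) (auto simp: fixpoints_def)
  ultimately show ?thesis
    by (simp add: card_image)
qed

definition periodic_fds :: "'a set \<Rightarrow> ('a \<Rightarrow> 'a) \<Rightarrow> bool" where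
  "periodic_fds S f \<longleftrightarrow> is_fds S f \<and> cycle_states S f = S"

lemma periodic_fds_diff_forward_orbit:
  assumes "periodic_fds C f"
  shows "periodic_fds (C - forward_orbit f x) f"
proof -
  have "f z \<notin> forward_orbit f x" if z: "z \<in> C - forward_orbit f x" for z
  proof
    assume "f z \<in> forward_orbit f x"
    then obtain i where i: "f z = (f ^^ i) x"
      unfolding forward_orbit_def by blast
    obtain n where "0 < n" "(f ^^ n) z = z"
      using z assms unfolding periodic_fds_def cycle_states_def by blast
    then have "z = (f ^^ (n - 1)) (f z)"
      by (metis Suc_diff_1 funpow_Suc_right o_apply)
    also have "\<dots> = (f ^^ (n - 1 + i)) x"
      by (simp add: i funpow_add)
    finally show False
      using z unfolding forward_orbit_def by blast
  qed
  then show ?thesis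
    using assms unfolding periodic_fds_def is_fds_def cycle_states_def by auto
qed

lemma card_fixpoints_diff_forward_orbit:
  assumes "finite C" "forward_orbit f x \<subseteq> C" "minimal_period f x m"
  shows "card (fixpoints (C - forward_orbit f x) (f ^^ j))
           = card (fixpoints C (f ^^ j)) - (if m dvd j then m else 0)"
proof -
  define R where "R = (if m dvd j then forward_orbit f x else {})"
  have "fixpoints (C - forward_orbit f x) (f ^^ j) = fixpoints C (f ^^ j) - R"
    using funpow_fixes_forward_orbit_iff[OF assms(3)] unfolding fixpoints_def R_def by auto
  moreover have "R \<subseteq> fixpoints C (f ^^ j)"
    using funpow_fixes_forward_orbit_iff[OF assms(3)] assms(2) unfolding fixpoints_def R_def by auto
  moreover have "finite R"
    using assms(1,2) finite_subset unfolding R_def by auto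
  moreover have "card R = (if m dvd j then m else 0)"
    using card_forward_orbit[OF assms(3)] unfolding R_def by simp
  ultimately show ?thesis
    by (simp add: card_Diff_subset)
qed

lemma exists_minimal_period_point:
  assumes "C \<noteq> {}" "cycle_states C f = C"
  obtains x m where "x \<in> C" "minimal_period f x m"
    "\<And>d. 0 < d \<Longrightarrow> d < m \<Longrightarrow> fixpoints C (f ^^ d) = {}"
proof -
  have ex: "\<exists>m. 0 < m \<and> fixpoints C (f ^^ m) \<noteq> {}"
    using assms unfolding cycle_states_def fixpoints_def by blast
  define m where "m = (LEAST m. 0 < m \<and> fixpoints C (f ^^ m) \<noteq> {})"
  have m: "0 < m" "fixpoints C (f ^^ m) \<noteq> {}"
    using LeastI_ex[OF ex] unfolding m_def by auto
  have shorter: "fixpoints C (f ^^ d) = {}" if "0 < d" "d < m" for d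
    using not_less_Least[of d] that unfolding m_def by blast
  obtain x where "x \<in> C" "(f ^^ m) x = x"
    using m(2) unfolding fixpoints_def by blast
  moreover have "minimal_period f x m"
    using calculation m(1) shorter unfolding minimal_period_def fixpoints_def by blast
  ultimately show ?thesis
    using shorter that by blast
qed

lemma fds_iso_from_diff_forward_orbits:
  assumes C: "periodic_fds C f" "x \<in> C" "minimal_period f x m"
    and D: "periodic_fds D g" "y \<in> D" "minimal_period g y m"
    and rest: "fds_iso (C - forward_orbit f x) f (D - forward_orbit g y) g"
  shows "fds_iso C f D g"
proof -
  have closed: "f ` C \<subseteq> C" "g ` D \<subseteq> D"
    using C(1) D(1) unfolding periodic_fds_def is_fds_def by auto
  have "fds_iso (forward_orbit f x \<union> (C - forward_orbit f x)) f
                (forward_orbit g y \<union> (D - forward_orbit g y)) g"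
  proof (rule fds_iso_Un)
    show "fds_iso (forward_orbit f x) f (forward_orbit g y) g"
      using C(3) D(3) by (rule fds_iso_forward_orbits)
    show "f ` (C - forward_orbit f x) \<subseteq> C - forward_orbit f x"
      using periodic_fds_diff_forward_orbit[OF C(1)] unfolding periodic_fds_def is_fds_def by blast
    show "f ` forward_orbit f x \<subseteq> forward_orbit f x"
      by (rule image_forward_orbit_subset)
  qed (use rest in auto)
  moreover have "forward_orbit f x \<subseteq> C" "forward_orbit g y \<subseteq> D"
    using closed C(2) D(2) by (simp_all add: forward_orbit_subset)
  ultimately show ?thesis
    by (simp add: Un_absorb1)
qed

lemma exists_minimal_period_points_if_card_fixpoints_eq:
  assumes "periodic_fds C f" "periodic_fds D g" "C \<noteq> {}"
    "\<And>j. 0 < j \<Longrightarrow> card (fixpoints C (f ^^ j)) = card (fixpoints D (g ^^ j))"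
  obtains x y m where "x \<in> C" "minimal_period f x m" "y \<in> D" "minimal_period g y m"
proof -
  have "finite C" "finite D"
    using assms(1,2) unfolding periodic_fds_def is_fds_def by auto
  then have "finite (fixpoints C (f ^^ j))" "finite (fixpoints D (g ^^ j))" for j
    by (simp_all add: fixpoints_def)
  then have fixpoints_empty_iff: "fixpoints D (g ^^ j) = {} \<longleftrightarrow> fixpoints C (f ^^ j) = {}"
    if "0 < j" for j
    using assms(4)[OF that] by (simp flip: card_0_eq)
  obtain x m where x: "x \<in> C" "minimal_period f x m"
    and no_shorter: "\<And>d. 0 < d \<Longrightarrow> d < m \<Longrightarrow> fixpoints C (f ^^ d) = {}"
    using exists_minimal_period_point[OF assms(3)] assms(1) unfolding periodic_fds_def by blast
  have "0 < m" "x \<in> fixpoints C (f ^^ m)"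
    using x unfolding minimal_period_def fixpoints_def by auto
  then obtain y where "y \<in> D" "(g ^^ m) y = y"
    using fixpoints_empty_iff[of m] unfolding fixpoints_def by blast
  moreover have "minimal_period g y m"
    using calculation \<open>0 < m\<close> no_shorter fixpoints_empty_iff
    unfolding minimal_period_def fixpoints_def by blast
  ultimately show ?thesis
    using that x by blast
qed

lemma fds_iso_if_card_fixpoints_eq:
  assumes "periodic_fds C f" "periodic_fds D g"
    "\<And>j. 0 < j \<Longrightarrow> card (fixpoints C (f ^^ j)) = card (fixpoints D (g ^^ j))"
  shows "fds_iso C f D g"
  using assms
proof (induction "card C" arbitrary: C D rule: less_induct)
  case less
  show ?case
  proof (cases "C = {}")
    case True
    have "D = {}"
    proof (rule ccontr)
      assume "D \<noteq> {}"
      then obtain x where "x \<in> C"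
        using exists_minimal_period_points_if_card_fixpoints_eq[of D g C f] less.prems by metis
      with True show False
        by simp
    qed
    with True show ?thesis
      unfolding fds_iso_def bij_betw_def by simp
  next
    case False
    then obtain x y m where x: "x \<in> C" "minimal_period f x m" and y: "y \<in> D" "minimal_period g y m"
      using exists_minimal_period_points_if_card_fixpoints_eq less.prems by metis
    have "fds_iso (C - forward_orbit f x) f (D - forward_orbit g y) g"
    proof (rule less.hyps)
      have "finite C" "finite D" "f ` C \<subseteq> C" "g ` D \<subseteq> D"
        using less.prems(1,2) unfolding periodic_fds_def is_fds_def by auto
      moreover have "x \<in> forward_orbit f x"
        unfolding forward_orbit_def by (metis funpow_0 rangeI)
      ultimately show "card (C - forward_orbit f x) < card C"
        using x(1) by (intro psubset_card_mono finite_Diff) blast+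
      show "periodic_fds (C - forward_orbit f x) f" "periodic_fds (D - forward_orbit g y) g"
        using less.prems(1,2) by (simp_all add: periodic_fds_diff_forward_orbit)
      show "card (fixpoints (C - forward_orbit f x) (f ^^ j))
              = card (fixpoints (D - forward_orbit g y) (g ^^ j))" if "0 < j" for j
        using card_fixpoints_diff_forward_orbit[OF \<open>finite C\<close> _ x(2)]
          card_fixpoints_diff_forward_orbit[OF \<open>finite D\<close> _ y(2)] less.prems(3)[OF that]
          forward_orbit_subset[OF \<open>f ` C \<subseteq> C\<close> x(1)] forward_orbit_subset[OF \<open>g ` D \<subseteq> D\<close> y(1)]
        by simp
    qed
    then show ?thesis
      by (rule fds_iso_from_diff_forward_orbits[OF less.prems(1) x less.prems(2) y])
  qed
qed

lemma is_fds_fds_pow: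
  assumes "is_fds S f"
  shows "is_fds (fds_pow_carrier S k) (fds_pow f k)"
  using assms unfolding is_fds_def fds_pow_carrier_def fds_pow_def
  by (auto simp: finite_PiE PiE_iff)

lemma funpow_fds_pow:
  assumes "x \<in> extensional {..<k}"
  shows "(fds_pow f k ^^ n) x = fds_pow (f ^^ n) k x"
proof (induction n)
  case 0
  then show ?case
    using assms by (simp add: fds_pow_def extensional_restrict)
next
  case (Suc n)
  have "(fds_pow f k ^^ Suc n) x = fds_pow f k (fds_pow (f ^^ n) k x)"
    by (simp only: funpow.simps o_apply Suc.IH)
  also have "\<dots> = fds_pow (f ^^ Suc n) k x"
    by (simp add: fds_pow_def fun_eq_iff)
  finally show ?case .
qed

lemma fixpoints_fds_pow:
  "fixpoints (fds_pow_carrier S k) (fds_pow f k) = fds_pow_carrier (fixpoints S f) k"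
proof (intro equalityI subsetI)
  fix x assume "x \<in> fixpoints (fds_pow_carrier S k) (fds_pow f k)"
  then have x: "x \<in> PiE {..<k} (\<lambda>_. S)" and eq: "restrict (\<lambda>i. f (x i)) {..<k} = x"
    unfolding fixpoints_def fds_pow_carrier_def fds_pow_def by auto
  have "f (x i) = x i" if "i < k" for i
    using fun_cong[OF eq, of i] that by simp
  then show "x \<in> fds_pow_carrier (fixpoints S f) k"
    using x unfolding fixpoints_def fds_pow_carrier_def by (simp add: PiE_iff)
next
  fix x assume "x \<in> fds_pow_carrier (fixpoints S f) k"
  then have x: "x \<in> PiE {..<k} (\<lambda>_. S)" "x \<in> extensional {..<k}" "\<forall>i<k. f (x i) = x i"
    unfolding fixpoints_def fds_pow_carrier_def by (simp_all add: PiE_iff)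
  have "restrict (\<lambda>i. f (x i)) {..<k} = restrict x {..<k}"
    using x(3) by (intro restrict_ext) simp
  also have "\<dots> = x"
    using x(2) by (rule extensional_restrict)
  finally show "x \<in> fixpoints (fds_pow_carrier S k) (fds_pow f k)"
    using x(1) unfolding fixpoints_def fds_pow_carrier_def fds_pow_def by simp
qed

lemma card_fixpoints_funpow_fds_pow:
  "card (fixpoints (fds_pow_carrier S k) (fds_pow f k ^^ n)) = card (fixpoints S (f ^^ n)) ^ k"
proof -
  have "fixpoints (fds_pow_carrier S k) (fds_pow f k ^^ n)
          = fixpoints (fds_pow_carrier S k) (fds_pow (f ^^ n) k)"
    unfolding fixpoints_def fds_pow_carrier_def by (auto simp: funpow_fds_pow PiE_iff)
  also have "\<dots> = fds_pow_carrier (fixpoints S (f ^^ n)) k"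
    by (rule fixpoints_fds_pow)
  finally show ?thesis
    by (simp add: fds_pow_carrier_def card_PiE)
qed

lemma periodic_fds_cycle_states:
  assumes "is_fds S f"
  shows "periodic_fds (cycle_states S f) f"
proof -
  have "f s \<in> cycle_states S f" if s: "s \<in> cycle_states S f" for s
  proof -
    obtain m where "s \<in> S" "0 < m" "(f ^^ m) s = s"
      using s unfolding cycle_states_def by blast
    moreover have "(f ^^ m) (f s) = f s"
      using calculation by (metis funpow_swap1)
    ultimately show ?thesis
      using assms unfolding cycle_states_def is_fds_def by auto
  qed
  then show ?thesis
    using assms unfolding periodic_fds_def is_fds_def cycle_states_def by auto
qed

lemma fixpoints_funpow_cycle_states:
  assumes "0 < n"
  shows "fixpoints (cycle_states S f) (f ^^ n) = fixpoints S (f ^^ n)"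
  using assms unfolding fixpoints_def cycle_states_def by auto

theorem mainTheorem17:
  fixes SA :: "'a set" and A :: "'a \<Rightarrow> 'a" and SB :: "'b set" and B :: "'b \<Rightarrow> 'b" and k :: nat
  assumes "is_fds SA A" and "is_fds SB B" and "k \<ge> 1"
    and "fds_iso (fds_pow_carrier SA k) (fds_pow A k) (fds_pow_carrier SB k) (fds_pow B k)"
  shows "fds_iso (cycle_states SA A) A (cycle_states SB B) B"
proof -
  have counts_eq: "card (fixpoints SA (A ^^ j)) = card (fixpoints SB (B ^^ j))" for j
  proof -
    have closed: "fds_pow A k ` fds_pow_carrier SA k \<subseteq> fds_pow_carrier SA k"
      using is_fds_fds_pow[OF assms(1)] unfolding is_fds_def by blast
    have "fds_iso (fds_pow_carrier SA k) (fds_pow A k ^^ j) (fds_pow_carrier SB k) (fds_pow B k ^^ j)"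
      using assms(4) closed by (rule fds_iso_funpow)
    then have "card (fixpoints (fds_pow_carrier SA k) (fds_pow A k ^^ j))
                 = card (fixpoints (fds_pow_carrier SB k) (fds_pow B k ^^ j))"
      using funpow_image_subset[OF closed] by (rule fds_iso_card_fixpoints)
    then have "card (fixpoints SA (A ^^ j)) ^ k = card (fixpoints SB (B ^^ j)) ^ k"
      by (simp only: card_fixpoints_funpow_fds_pow)
    then show ?thesis
      using \<open>k \<ge> 1\<close> by (simp add: power_eq_imp_eq_base)
  qed
  show ?thesis
    using assms(1,2) counts_eq
    by (intro fds_iso_if_card_fixpoints_eq periodic_fds_cycle_states)
      (simp_all add: fixpoints_funpow_cycle_states)
qed

end
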